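(* For every $0<\delta\le 1$ there exists a Guesser with $\log^2 n\cdot \log_{1+\delta} 2 + \log n$ bits of memory whose expected number of correct guesses against the random-shuffle Dealer is $$\frac{\delta}{(1+\delta)\ln(1+\delta)}\,\ln n .$$
   Context: Card guessing game: a deck consists of $n$ distinct cards labeled $1,\dots,n$ and the game lasts $n$ turns. In each turn the Dealer selects a card from the cards still in the deck and places it face down; the Guesser then names a card of $[n]$; the card is revealed and discarded. A guess is correct if it equals the drawn card; the score is the number of correct guesses. A Guesser with $m$ bits of memory keeps a memory state in $\{0,1\}^m$ between turns and consists of a (possibly randomized) guessing function (memory state $\mapsto$ guess) and a (possibly randomized) state-transition function (memory state and revealed card $\mapsto$ new memory state). The random-shuffle Dealer arranges the deck according to a uniformly random permutation and draws the cards in that order. $\log$ is base 2, $\ln$ is natural. *)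

theory Defs
  imports "HOL-Probability.Probability" "HOL-Combinatorics.Multiset_Permutations"
    "HOL-Library.Landau_Symbols"
begin

text \<open>A Guesser with m bits of memory: memory states are the numbers 0..2^m-1
  (encoding bitstrings in {0,1}^m); a randomized guessing function
  (state to distribution of guesses) and a randomized transition function
  (state, revealed card to distribution of new states), plus an initial state.\<close>

record guesser =
  mem_bits :: nat
  guess_fn :: "nat \<Rightarrow> nat pmf"
  trans_fn :: "nat \<Rightarrow> nat \<Rightarrow> nat pmf"
  init_state :: nat

definition valid_guesser :: "nat \<Rightarrow> guesser \<Rightarrow> bool" where
  "valid_guesser n G \<longleftrightarrow>
     init_state G < 2 ^ mem_bits G \<and>
     (\<forall>s < 2 ^ mem_bits G. set_pmf (guess_fn G s) \<subseteq> {1..n} \<and>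
        (\<forall>c \<in> {1..n}. set_pmf (trans_fn G s c) \<subseteq> {..< 2 ^ mem_bits G}))"

fun play :: "guesser \<Rightarrow> nat \<Rightarrow> nat list \<Rightarrow> nat pmf" where
  "play G s [] = return_pmf 0"
| "play G s (c # cs) =
     do { x \<leftarrow> guess_fn G s;
          s' \<leftarrow> trans_fn G s c;
          r \<leftarrow> play G s' cs;
          return_pmf ((if x = c then 1 else 0) + r) }"

definition expected_score :: "nat \<Rightarrow> guesser \<Rightarrow> real" where
  "expected_score n G =
     measure_pmf.expectation
       (pmf_of_set (permutations_of_set {1..n}) \<bind> (\<lambda>\<pi>. play G (init_state G) \<pi>))
       real"

end

(* The Guesser fixes thresholds s_1 < ... < s_k and, for each s = s_i, remembers the number and
   the sum modulo s of the cards of {1..s} seen so far, packed into one mixed-radix number below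
   the product of the s_i^2.  As soon as a single card of some {1..s_i} is left in the deck, the
   count reveals this and the sum identifies that card, which is then guessed.  Hence the score is
   at least the number of i for which the last card of {1..s_i} to appear lies in the band
   (s_(i-1), s_i], and at most one more (the default guess 1).  By symmetry the last card of
   {1..s} is uniformly distributed on {1..s}, so the expected score is, up to 1, the sum of
   (s_i - s_(i-1)) / s_i.  For s_j = floor ((1+delta)^j) each term is about delta/(1+delta) and
   there are about log_(1+delta) n of them, while the memory is about
   sum_j 2 j log(1+delta) <= (log n)^2 log_(1+delta) 2. *)

theory Submission
  imports Defs
begin

section \<open>Mixed-radix encoding\<close>

fun radix_encode :: "nat list \<Rightarrow> nat list \<Rightarrow> nat" where
  "radix_encode (r # rs) (d # ds) = d + r * radix_encode rs ds"
| "radix_encode _ _ = 0"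

fun radix_decode :: "nat list \<Rightarrow> nat \<Rightarrow> nat list" where
  "radix_decode [] x = []"
| "radix_decode (r # rs) x = x mod r # radix_decode rs (x div r)"

lemma radix_decode_less: "0 \<notin> set rs \<Longrightarrow> list_all2 (<) (radix_decode rs x) rs"
  by (induction rs arbitrary: x) auto

lemma radix_encode_less: "list_all2 (<) ds rs \<Longrightarrow> radix_encode rs ds < prod_list rs"
proof (induction rule: list_all2_induct)
  case (Cons d ds r rs)
  then have "d + r * radix_encode rs ds < r * (radix_encode rs ds + 1)"
    by simp
  also have "\<dots> \<le> r * prod_list rs"
    using Cons.IH by (intro mult_le_mono2) simp
  finally show ?case by simp
qed simp

lemma radix_decode_encode: "list_all2 (<) ds rs \<Longrightarrow> radix_decode rs (radix_encode rs ds) = ds"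
  by (induction rule: list_all2_induct) simp_all

section \<open>Digest of the cards seen below a threshold\<close>

text \<open>Once all but one card of \<open>{1..s}\<close> have been seen, the count
  detects this and the sum determines the missing card.\<close>

definition digest :: "nat \<Rightarrow> nat set \<Rightarrow> nat" where
  "digest s A = (card ({1..s} \<inter> A) mod s) * s + \<Sum>({1..s} \<inter> A) mod s"

definition digest_update :: "nat \<Rightarrow> nat \<Rightarrow> nat \<Rightarrow> nat" where
  "digest_update s d c =
     (if c \<in> {1..s} then ((d div s + 1) mod s) * s + (d mod s + c) mod s else d)"

definition digest_one_missing :: "nat \<Rightarrow> nat \<Rightarrow> bool" where
  "digest_one_missing s d \<longleftrightarrow> d div s = s - 1"

definition digest_missing_card :: "nat \<Rightarrow> nat \<Rightarrow> nat" where
  "digest_missing_card s d =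
     (THE y. y \<in> {1..s} \<and> (d mod s + y) mod s = (s * (s + 1) div 2) mod s)"

lemma digit_pair_less: "a < s \<Longrightarrow> b < s \<Longrightarrow> a * s + b < s * (s::nat)"
proof -
  assume "a < s" "b < s"
  then have "a * s + b < (a + 1) * s" by simp
  also have "\<dots> \<le> s * s" using \<open>a < s\<close> by (intro mult_le_mono1) simp
  finally show ?thesis .
qed

lemma digest_less: "0 < s \<Longrightarrow> digest s A < s * s"
  unfolding digest_def by (rule digit_pair_less) auto

lemma digest_update_less: "0 < s \<Longrightarrow> d < s * s \<Longrightarrow> digest_update s d c < s * s"
  unfolding digest_update_def by (auto intro: digit_pair_less)

lemma digest_update_digest:
  assumes "0 < s" "c \<notin> A"
  shows "digest_update s (digest s A) c = digest s (insert c A)"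
proof (cases "c \<in> {1..s}")
  case True
  then have "{1..s} \<inter> insert c A = insert c ({1..s} \<inter> A)" by auto
  moreover have "c \<notin> {1..s} \<inter> A" using assms(2) by simp
  ultimately have "card ({1..s} \<inter> insert c A) = card ({1..s} \<inter> A) + 1"
    and "\<Sum>({1..s} \<inter> insert c A) = \<Sum>({1..s} \<inter> A) + c"
    by simp_all
  with True assms(1) show ?thesis
    unfolding digest_update_def digest_def by (simp add: mod_add_left_eq mod_Suc_eq)
next
  case False
  then have "{1..s} \<inter> insert c A = {1..s} \<inter> A" by auto
  then show ?thesis unfolding digest_update_def if_not_P[OF False] digest_def by simp
qed

lemma digest_one_missing_iff:
  assumes "2 \<le> s"
  shows "digest_one_missing s (digest s A) \<longleftrightarrow> (\<exists>y. {1..s} - A = {y})"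
proof -
  have le: "card ({1..s} \<inter> A) \<le> s"
    using card_mono[of "{1..s}" "{1..s} \<inter> A"] by simp
  have "digest_one_missing s (digest s A) \<longleftrightarrow> card ({1..s} \<inter> A) mod s = s - 1"
    unfolding digest_one_missing_def digest_def using assms by simp
  also have "\<dots> \<longleftrightarrow> card ({1..s} \<inter> A) = s - 1"
    using le assms by (cases "card ({1..s} \<inter> A) = s") auto
  also have "\<dots> \<longleftrightarrow> card ({1..s} - A) = 1"
    using le card_Diff_subset_Int[of "{1..s}" A] assms by auto
  finally show ?thesis by (simp add: card_1_singleton_iff)
qed

lemma eq_if_mod_eq_in_interval:
  "y \<in> {1..s} \<Longrightarrow> z \<in> {1..s} \<Longrightarrow> y mod s = z mod s \<Longrightarrow> y = (z::nat)"
  by (cases "y = s"; cases "z = s") auto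

lemma digest_missing_card_digest:
  assumes missing: "{1..s} - A = {y}"
  shows "digest_missing_card s (digest s A) = y"
  unfolding digest_missing_card_def
proof (rule the_equality)
  have y: "y \<in> {1..s}" "y \<notin> A" using missing by auto
  then have "{1..s} = insert y ({1..s} \<inter> A)" using missing by blast
  then have "\<Sum>{1..s} = y + \<Sum>({1..s} \<inter> A)"
    using y by (metis finite_Int finite_atLeastAtMost IntD2 sum.insert)
  then have "\<Sum>({1..s} \<inter> A) + y = \<Sum>{1..s}" by simp
  also have "\<dots> = s * (s + 1) div 2"
    using gauss_sum_from_Suc_0[of s, where ?'a = nat] by simp
  finally have sum: "(digest s A mod s + y) mod s = (s * (s + 1) div 2) mod s"
    using y unfolding digest_def by (simp add: mod_add_left_eq)
  with y show "y \<in> {1..s} \<and> (digest s A mod s + y) mod s = (s * (s + 1) div 2) mod s"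
    by simp
  fix z assume "z \<in> {1..s} \<and> (digest s A mod s + z) mod s = (s * (s + 1) div 2) mod s"
  then have z: "z \<in> {1..s}" "(digest s A mod s + z) mod s = (digest s A mod s + y) mod s"
    using sum by simp_all
  then have "z mod s = y mod s" by (simp add: nat_mod_eq_iff)
  with z(1) y(1) show "z = y" by (rule eq_if_mod_eq_in_interval)
qed

abbreviation radices :: "nat list \<Rightarrow> nat list" where
  "radices ss \<equiv> map (\<lambda>s. s * s) ss"

definition threshold_state :: "nat list \<Rightarrow> nat set \<Rightarrow> nat" where
  "threshold_state ss A = radix_encode (radices ss) (map (\<lambda>s. digest s A) ss)"

definition threshold_step :: "nat list \<Rightarrow> nat \<Rightarrow> nat \<Rightarrow> nat" where
  "threshold_step ss x c =
     radix_encode (radices ss) (map2 (\<lambda>s d. digest_update s d c) ss (radix_decode (radices ss) x))"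

definition threshold_guess :: "nat \<Rightarrow> nat list \<Rightarrow> nat \<Rightarrow> nat" where
  "threshold_guess n ss x =
     (case find (\<lambda>(s, d). digest_one_missing s d) (zip ss (radix_decode (radices ss) x)) of
        Some (s, d) \<Rightarrow> if digest_missing_card s d \<in> {1..n} then digest_missing_card s d else 1
      | None \<Rightarrow> 1)"

definition threshold_guesser :: "nat \<Rightarrow> nat list \<Rightarrow> guesser" where
  "threshold_guesser n ss =
     \<lparr>mem_bits = nat \<lceil>log 2 (prod_list (radices ss))\<rceil>,
      guess_fn = (\<lambda>x. return_pmf (threshold_guess n ss x)),
      trans_fn = (\<lambda>x c. return_pmf (threshold_step ss x c)),
      init_state = threshold_state ss {}\<rparr>"

fun threshold_score :: "nat \<Rightarrow> nat list \<Rightarrow> nat \<Rightarrow> nat list \<Rightarrow> nat" where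
  "threshold_score n ss x [] = 0"
| "threshold_score n ss x (c # cs) =
     (if threshold_guess n ss x = c then 1 else 0)
       + threshold_score n ss (threshold_step ss x c) cs"

lemma play_threshold_guesser:
  "play (threshold_guesser n ss) x cs = return_pmf (threshold_score n ss x cs)"
  by (induction cs arbitrary: x) (simp_all add: threshold_guesser_def bind_return_pmf)

lemma radix_decode_threshold_state:
  "0 \<notin> set ss \<Longrightarrow> radix_decode (radices ss) (threshold_state ss A) = map (\<lambda>s. digest s A) ss"
  unfolding threshold_state_def
  by (rule radix_decode_encode)
    (auto simp: list_all2_map1 list_all2_map2 list_all2_same intro!: digest_less gr0I)

lemma prod_radices_pos: "0 \<notin> set ss \<Longrightarrow> 0 < prod_list (radices ss)"
proof -
  assume "0 \<notin> set ss"
  then have "prod_list (radices ss) \<noteq> 0"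
    by (auto simp: prod_list_zero_iff)
  then show ?thesis by simp
qed

lemma threshold_state_less:
  "0 \<notin> set ss \<Longrightarrow> threshold_state ss A < prod_list (radices ss)"
  unfolding threshold_state_def
  by (rule radix_encode_less)
    (auto simp: list_all2_map1 list_all2_map2 list_all2_same intro!: digest_less gr0I)

lemma threshold_step_less:
  assumes "0 \<notin> set ss"
  shows "threshold_step ss x c < prod_list (radices ss)"
proof -
  have "list_all2 (<) (radix_decode (radices ss) x) (radices ss)"
    using assms by (intro radix_decode_less) auto
  then have "list_all2 (\<lambda>d s. d < s * s) (radix_decode (radices ss) x) ss"
    by (simp add: list_all2_map2)
  then have "list_all2 (<) (map2 (\<lambda>s d. digest_update s d c) ss (radix_decode (radices ss) x))
      (radices ss)"
    using assms by (auto simp: list_all2_conv_all_nth intro!: digest_update_less gr0I)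
  then show ?thesis unfolding threshold_step_def by (rule radix_encode_less)
qed

lemma threshold_step_state:
  assumes "0 \<notin> set ss" "c \<notin> A"
  shows "threshold_step ss (threshold_state ss A) c = threshold_state ss (insert c A)"
proof -
  have "map2 (\<lambda>s d. digest_update s d c) ss (map (\<lambda>s. digest s A) ss)
      = map (\<lambda>s. digest s (insert c A)) ss"
    using assms by (auto simp: zip_map2 zip_same_conv_map intro!: digest_update_digest gr0I)
  then show ?thesis
    unfolding threshold_step_def radix_decode_threshold_state[OF assms(1)]
    by (simp add: threshold_state_def)
qed

lemma threshold_guess_range: "1 \<le> n \<Longrightarrow> threshold_guess n ss x \<in> {1..n}"
  unfolding threshold_guess_def by (simp split: option.split prod.split)

lemma find_map: "find P (map f xs) = map_option f (find (P \<circ> f) xs)"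
  by (induction xs) auto

lemma threshold_guess_state:
  assumes "0 \<notin> set ss"
  shows "threshold_guess n ss (threshold_state ss A) =
    (case find (\<lambda>s. digest_one_missing s (digest s A)) ss of
       Some s \<Rightarrow>
         if digest_missing_card s (digest s A) \<in> {1..n}
         then digest_missing_card s (digest s A) else 1
     | None \<Rightarrow> 1)"
proof -
  have "zip ss (map (\<lambda>s. digest s A) ss) = map (\<lambda>s. (s, digest s A)) ss"
    by (induction ss) auto
  then show ?thesis
    using assms
    by (simp add: threshold_guess_def radix_decode_threshold_state find_map comp_def
        split: option.split)
qed

lemma threshold_guess_one_missing:
  assumes ss: "\<forall>s\<in>set ss. 2 \<le> s \<and> s \<le> n" and "\<exists>s\<in>set ss. \<exists>y. {1..s} - A = {y}"
  shows "\<exists>s\<in>set ss. {1..s} - A = {threshold_guess n ss (threshold_state ss A)}"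
proof -
  have "find (\<lambda>s. digest_one_missing s (digest s A)) ss \<noteq> None"
    using assms by (auto simp: find_None_iff digest_one_missing_iff)
  then obtain s where find: "find (\<lambda>s. digest_one_missing s (digest s A)) ss = Some s"
    by blast
  then have s: "s \<in> set ss" "digest_one_missing s (digest s A)"
    by (auto simp: find_Some_iff)
  then obtain y where y: "{1..s} - A = {y}"
    using ss digest_one_missing_iff by blast
  then have "y \<in> {1..s}"
    by blast
  with ss s(1) have "y \<in> {1..n}"
    by auto
  moreover have "0 \<notin> set ss"
    using ss by auto
  ultimately have "threshold_guess n ss (threshold_state ss A) = y"
    using y by (simp add: threshold_guess_state find digest_missing_card_digest)
  with s(1) y show ?thesis by blast
qed

lemma threshold_guess_default:
  assumes ss: "\<forall>s\<in>set ss. 2 \<le> s" and "\<not> (\<exists>s\<in>set ss. \<exists>y. {1..s} - A = {y})"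
  shows "threshold_guess n ss (threshold_state ss A) = 1"
proof -
  have "find (\<lambda>s. digest_one_missing s (digest s A)) ss = None"
    using assms by (auto simp: find_None_iff digest_one_missing_iff)
  moreover have "0 \<notin> set ss"
    using ss by auto
  ultimately show ?thesis by (simp add: threshold_guess_state)
qed

section \<open>Bands between consecutive thresholds\<close>

definition band :: "nat list \<Rightarrow> nat \<Rightarrow> nat set" where
  "band ss i = {(0 # ss) ! i <.. (0 # ss) ! Suc i}"

definition last_in_band :: "nat list \<Rightarrow> nat \<Rightarrow> nat list \<Rightarrow> bool" where
  "last_in_band ss i cs \<longleftrightarrow>
     (let f = filter (\<lambda>c. c \<in> {1..ss ! i}) cs in f \<noteq> [] \<and> last f \<in> band ss i)"

lemma band_subset: "band ss i \<subseteq> {1..ss ! i}"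
  unfolding band_def by auto

lemma last_in_band_Cons:
  "last_in_band ss i (c # cs) \<longleftrightarrow>
     last_in_band ss i cs \<or> (c \<in> band ss i \<and> {1..ss ! i} \<inter> set cs = {})"
  using band_subset[of ss i] by (auto simp: last_in_band_def filter_empty_conv)

lemma last_in_band_nonempty: "last_in_band ss i cs \<Longrightarrow> {1..ss ! i} \<inter> set cs \<noteq> {}"
  by (auto simp: last_in_band_def filter_empty_conv)

locale threshold_list =
  fixes n :: nat and ss :: "nat list"
  assumes sorted_thresholds: "sorted_wrt (<) ss"
    and thresholds_bounded: "\<forall>s\<in>set ss. 2 \<le> s \<and> s \<le> n"
begin

lemma threshold_ge: "i < length ss \<Longrightarrow> 2 \<le> ss ! i"
  and threshold_le: "i < length ss \<Longrightarrow> ss ! i \<le> n"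
  using thresholds_bounded nth_mem by blast+

lemma zero_notin_thresholds: "0 \<notin> set ss"
  using thresholds_bounded by auto

lemma sorted_zero_thresholds: "sorted (0 # ss)"
  using sorted_thresholds by (simp add: strict_sorted_imp_sorted)

lemma bands_disjoint:
  assumes "i < length ss" "j < length ss" "c \<in> band ss i" "c \<in> band ss j"
  shows "i = j"
proof (rule ccontr)
  have mono: "(0 # ss) ! Suc k \<le> (0 # ss) ! l" if "k < l" "l < length ss" for k l
    using sorted_zero_thresholds that by (intro sorted_nth_mono) auto
  assume "i \<noteq> j"
  then have "i < j \<or> j < i" by linarith
  then show False
    using assms mono unfolding band_def by (auto dest: mono)
qed

lemma band_cover:
  assumes "i0 < length ss" "c \<in> {1..ss ! i0}"
  shows "\<exists>i\<le>i0. c \<in> band ss i"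
proof -
  define i where "i = (LEAST i. c \<le> (0 # ss) ! Suc i)"
  have "c \<le> (0 # ss) ! Suc i0"
    using assms(2) by simp
  then have "c \<le> (0 # ss) ! Suc i" and "i \<le> i0"
    unfolding i_def by (auto intro: LeastI Least_le)
  moreover have "(0 # ss) ! i < c"
  proof (cases i)
    case (Suc k)
    then have "\<not> c \<le> (0 # ss) ! Suc k"
      unfolding i_def by (metis lessI not_less_Least)
    then show ?thesis using Suc by simp
  qed (use assms(2) in simp)
  ultimately show ?thesis
    unfolding band_def by auto
qed

definition closed_bands :: "nat \<Rightarrow> nat list \<Rightarrow> nat set" where
  "closed_bands c cs = {i. i < length ss \<and> c \<in> band ss i \<and> {1..ss ! i} \<inter> set cs = {}}"

lemma card_closed_bands_le: "card (closed_bands c cs) \<le> 1"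
  using bands_disjoint unfolding closed_bands_def by (auto simp: card_le_Suc0_iff_eq)

context
  fixes A c cs
  assumes deck: "A \<union> insert c (set cs) = {1..n}" and "c \<notin> A" "c \<notin> set cs" "A \<inter> set cs = {}"
begin

lemma closed_band_one_missing: "i \<in> closed_bands c cs \<Longrightarrow> {1..ss ! i} - A = {c}"
  using deck \<open>c \<notin> A\<close> band_subset[of ss i] threshold_le[of i] unfolding closed_bands_def by fastforce

lemma guess_correct_if_closed_band:
  assumes "i \<in> closed_bands c cs"
  shows "threshold_guess n ss (threshold_state ss A) = c"
proof -
  have "i < length ss" and i: "{1..ss ! i} - A = {c}"
    using assms closed_band_one_missing unfolding closed_bands_def by auto
  then obtain s where "s \<in> set ss"
    and s: "{1..s} - A = {threshold_guess n ss (threshold_state ss A)}"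
    using threshold_guess_one_missing thresholds_bounded nth_mem by blast
  have "{1..s} - A \<subseteq> {1..ss ! i} - A \<or> {1..ss ! i} - A \<subseteq> {1..s} - A"
    by (cases "s \<le> ss ! i") auto
  with i s show ?thesis by auto
qed

lemma closed_band_if_guess_correct:
  assumes "threshold_guess n ss (threshold_state ss A) = c" "c \<noteq> 1"
  shows "closed_bands c cs \<noteq> {}"
proof -
  have "\<exists>s\<in>set ss. \<exists>y. {1..s} - A = {y}"
    using assms threshold_guess_default thresholds_bounded by blast
  then obtain j where j: "j < length ss" "{1..ss ! j} - A = {c}"
    using threshold_guess_one_missing thresholds_bounded assms(1) by (metis in_set_conv_nth)
  then obtain i where i: "i \<le> j" "c \<in> band ss i"
    using band_cover by blast
  have "ss ! i \<le> ss ! j"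
    using sorted_thresholds i(1) j(1) by (simp add: sorted_nth_mono strict_sorted_imp_sorted)
  then have "{1..ss ! i} \<inter> set cs \<subseteq> ({1..ss ! j} - A) - {c}"
    using \<open>A \<inter> set cs = {}\<close> \<open>c \<notin> set cs\<close> by auto
  with i j show ?thesis
    unfolding closed_bands_def by auto
qed

end

lemma threshold_score_bounds:
  assumes "distinct cs" "A \<inter> set cs = {}" "A \<union> set cs = {1..n}"
  shows "card {i. i < length ss \<and> last_in_band ss i cs}
        \<le> threshold_score n ss (threshold_state ss A) cs
    \<and> threshold_score n ss (threshold_state ss A) cs
        \<le> card {i. i < length ss \<and> last_in_band ss i cs} + (if 1 \<in> set cs then 1 else 0)"
  using assms
proof (induction cs arbitrary: A)
  case Nil
  then show ?case by (simp add: last_in_band_def)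
next
  case (Cons c cs)
  have deck: "A \<union> insert c (set cs) = {1..n}" "c \<notin> A" "c \<notin> set cs" "A \<inter> set cs = {}"
    using Cons.prems by auto
  define hit :: nat where "hit = (if threshold_guess n ss (threshold_state ss A) = c then 1 else 0)"
  have "{i. i < length ss \<and> last_in_band ss i (c # cs)}
      = {i. i < length ss \<and> last_in_band ss i cs} \<union> closed_bands c cs"
    unfolding closed_bands_def last_in_band_Cons by auto
  moreover have "{i. i < length ss \<and> last_in_band ss i cs} \<inter> closed_bands c cs = {}"
    unfolding closed_bands_def using last_in_band_nonempty by auto
  ultimately have bands: "card {i. i < length ss \<and> last_in_band ss i (c # cs)}
      = card {i. i < length ss \<and> last_in_band ss i cs} + card (closed_bands c cs)"
    by (simp add: card_Un_disjoint closed_bands_def)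
  have "card (closed_bands c cs) \<le> hit"
    using card_closed_bands_le guess_correct_if_closed_band[OF deck]
    unfolding hit_def by (cases "closed_bands c cs = {}") fastforce+
  moreover have "hit \<le> card (closed_bands c cs) + (if c = 1 then 1 else 0)"
    using closed_band_if_guess_correct[OF deck] unfolding hit_def
    by (auto simp: card_gt_0_iff Suc_le_eq closed_bands_def)
  moreover have "threshold_score n ss (threshold_state ss A) (c # cs)
      = hit + threshold_score n ss (threshold_state ss (insert c A)) cs"
    by (simp add: hit_def threshold_step_state[OF zero_notin_thresholds deck(2)])
  moreover note Cons.IH[of "insert c A"]
  ultimately show ?case
    using Cons.prems deck unfolding bands by (auto split: if_splits)
qed

end

section \<open>The last card of a set in a random permutation\<close>

lemma card_eq_sum_card_fibers:
  assumes "finite A" "finite B" "f ` A \<subseteq> B"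
  shows "card A = (\<Sum>b\<in>B. card {x\<in>A. f x = b})"
  using sum_fun_comp[OF assms, of "\<lambda>_. 1::nat"] by simp

lemma last_filter_nonempty:
  assumes "\<pi> \<in> permutations_of_set A" "S \<subseteq> A" "b \<in> S"
  shows "filter (\<lambda>x. x \<in> S) \<pi> \<noteq> []"
  using assms permutations_of_setD(1)[OF assms(1)] by (auto simp: filter_empty_conv)

lemma card_last_filter_eq:
  assumes "S \<subseteq> A" "b \<in> S" "b' \<in> S"
  shows "card {\<pi>\<in>permutations_of_set A. last (filter (\<lambda>x. x \<in> S) \<pi>) = b'}
       = card {\<pi>\<in>permutations_of_set A. last (filter (\<lambda>x. x \<in> S) \<pi>) = b}"
proof -
  define \<tau> where "\<tau> = Transposition.transpose b b'"
  let ?P = "permutations_of_set A" and ?L = "\<lambda>\<pi>. last (filter (\<lambda>x. x \<in> S) \<pi>)"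
  have perm: "map \<tau> ` ?P = ?P"
    unfolding \<tau>_def using assms by (intro permutations_of_set_image_permutes permutes_swap_id) auto
  have "\<tau> x \<in> S \<longleftrightarrow> x \<in> S" for x
    using assms unfolding \<tau>_def by (cases "x = b"; cases "x = b'") auto
  then have L: "?L (map \<tau> \<pi>) = \<tau> (?L \<pi>)" if "\<pi> \<in> ?P" for \<pi>
    using last_filter_nonempty[OF that assms(1,2)] by (simp add: filter_map comp_def last_map)
  have "{\<pi>\<in>?P. ?L \<pi> = b'} = map \<tau> ` {\<pi>\<in>?P. ?L \<pi> = b}"
  proof (intro equalityI subsetI)
    fix \<pi> assume "\<pi> \<in> {\<pi>\<in>?P. ?L \<pi> = b'}"
    then have "map \<tau> \<pi> \<in> {\<pi>\<in>?P. ?L \<pi> = b}"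
      using perm L by (auto simp: \<tau>_def)
    moreover have "\<pi> = map \<tau> (map \<tau> \<pi>)"
      by (simp add: \<tau>_def map_idI)
    ultimately show "\<pi> \<in> map \<tau> ` {\<pi>\<in>?P. ?L \<pi> = b}"
      by blast
  qed (use perm L in \<open>auto simp: \<tau>_def\<close>)
  moreover have "inj_on (map \<tau>) {\<pi>\<in>?P. ?L \<pi> = b}"
    by (rule inj_on_subset[OF inj_mapI]) (simp_all add: \<tau>_def)
  ultimately show ?thesis
    by (simp add: card_image)
qed

lemma card_last_filter:
  assumes "finite A" "S \<subseteq> A" "b \<in> S"
  shows "card S * card {\<pi>\<in>permutations_of_set A. last (filter (\<lambda>x. x \<in> S) \<pi>) = b} = fact (card A)"
proof -
  let ?P = "permutations_of_set A" and ?L = "\<lambda>\<pi>. last (filter (\<lambda>x. x \<in> S) \<pi>)"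
  have "?L ` ?P \<subseteq> S"
    using last_filter_nonempty[OF _ assms(2,3)] last_in_set by fastforce
  moreover have "finite S"
    using assms finite_subset by blast
  ultimately have "card ?P = (\<Sum>b'\<in>S. card {\<pi>\<in>?P. ?L \<pi> = b'})"
    by (intro card_eq_sum_card_fibers) auto
  also have "\<dots> = (\<Sum>b'\<in>S. card {\<pi>\<in>?P. ?L \<pi> = b})"
    using assms by (intro sum.cong refl card_last_filter_eq) auto
  finally show ?thesis
    using assms(1) by simp
qed

definition band_weight :: "nat list \<Rightarrow> real" where
  "band_weight ss = (\<Sum>i<length ss. card (band ss i) / ss ! i)"

context threshold_list
begin

lemma card_last_in_band:
  assumes "i < length ss"
  shows "ss ! i * card {\<pi>\<in>permutations_of_set {1..n}. last_in_band ss i \<pi>}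
       = card (band ss i) * fact n"
proof -
  let ?P = "permutations_of_set {1..n}" and ?S = "{1..ss ! i}"
  let ?L = "\<lambda>\<pi>. last (filter (\<lambda>x. x \<in> ?S) \<pi>)"
  have S: "?S \<subseteq> {1..n}" "1 \<in> ?S"
    using threshold_le[OF assms] threshold_ge[OF assms] by auto
  have "{\<pi>\<in>?P. last_in_band ss i \<pi>} = {\<pi>\<in>?P. ?L \<pi> \<in> band ss i}"
    using last_filter_nonempty[OF _ S] unfolding last_in_band_def by auto
  moreover have "card {\<pi>\<in>?P. ?L \<pi> \<in> band ss i}
      = (\<Sum>b\<in>band ss i. card {\<pi>\<in>{\<pi>\<in>?P. ?L \<pi> \<in> band ss i}. ?L \<pi> = b})"
    by (rule card_eq_sum_card_fibers) (auto simp: band_def)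
  ultimately have "card {\<pi>\<in>?P. last_in_band ss i \<pi>}
      = (\<Sum>b\<in>band ss i. card {\<pi>\<in>{\<pi>\<in>?P. ?L \<pi> \<in> band ss i}. ?L \<pi> = b})"
    by simp
  also have "\<dots> = (\<Sum>b\<in>band ss i. card {\<pi>\<in>?P. ?L \<pi> = b})"
    by (intro sum.cong refl arg_cong[where f = card]) auto
  finally have "ss ! i * card {\<pi>\<in>?P. last_in_band ss i \<pi>}
      = (\<Sum>b\<in>band ss i. card ?S * card {\<pi>\<in>?P. ?L \<pi> = b})"
    by (simp add: sum_distrib_left)
  also have "\<dots> = (\<Sum>b\<in>band ss i. fact n)"
  proof (intro sum.cong refl)
    fix b assume "b \<in> band ss i"
    then have "b \<in> ?S"
      using band_subset by blast
    with card_last_filter[OF _ S(1)] show "card ?S * card {\<pi>\<in>?P. ?L \<pi> = b} = fact n"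
      by simp
  qed
  finally show ?thesis
    by simp
qed

lemma sum_card_last_in_band:
  "(\<Sum>\<pi>\<in>permutations_of_set {1..n}. real (card {i. i < length ss \<and> last_in_band ss i \<pi>}))
     = fact n * band_weight ss"
proof -
  let ?P = "permutations_of_set {1..n}"
  let ?bands = "\<lambda>\<pi>. card {i. i < length ss \<and> last_in_band ss i \<pi>}"
  have "real (?bands \<pi>) = (\<Sum>i<length ss. of_bool (last_in_band ss i \<pi>))" for \<pi>
  proof -
    have "{i. i < length ss \<and> last_in_band ss i \<pi>} = {..<length ss} \<inter> {i. last_in_band ss i \<pi>}"
      by auto
    then show ?thesis by simp
  qed
  then have "(\<Sum>\<pi>\<in>?P. real (?bands \<pi>)) = (\<Sum>\<pi>\<in>?P. \<Sum>i<length ss. of_bool (last_in_band ss i \<pi>))"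
    by (intro sum.cong refl)
  also have "\<dots> = (\<Sum>i<length ss. \<Sum>\<pi>\<in>?P. of_bool (last_in_band ss i \<pi>))"
    by (rule sum.swap)
  also have "\<dots> = (\<Sum>i<length ss. real (card {\<pi>\<in>?P. last_in_band ss i \<pi>}))"
  proof (intro sum.cong refl)
    fix i
    have "?P \<inter> {\<pi>. last_in_band ss i \<pi>} = {\<pi>\<in>?P. last_in_band ss i \<pi>}"
      by auto
    then show "(\<Sum>\<pi>\<in>?P. of_bool (last_in_band ss i \<pi>)) = real (card {\<pi>\<in>?P. last_in_band ss i \<pi>})"
      by simp
  qed
  also have "\<dots> = (\<Sum>i<length ss. fact n * (card (band ss i) / ss ! i))"
  proof (intro sum.cong refl)
    fix i assume "i \<in> {..<length ss}"
    then have "real (ss ! i) * card {\<pi>\<in>?P. last_in_band ss i \<pi>} = card (band ss i) * fact n"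
      "0 < ss ! i"
      using card_last_in_band[of i] threshold_ge[of i] by (auto simp flip: of_nat_mult)
    then show "real (card {\<pi>\<in>?P. last_in_band ss i \<pi>}) = fact n * (card (band ss i) / ss ! i)"
      by (simp add: field_simps)
  qed
  finally show ?thesis
    by (simp add: band_weight_def sum_distrib_left)
qed

end

lemma expected_score_threshold_guesser:
  "expected_score n (threshold_guesser n ss)
     = (\<Sum>\<pi>\<in>permutations_of_set {1..n}. real (threshold_score n ss (threshold_state ss {}) \<pi>))
       / fact n"
proof -
  have "play (threshold_guesser n ss) (threshold_state ss {})
      = (\<lambda>\<pi>. return_pmf (threshold_score n ss (threshold_state ss {}) \<pi>))"
    by (rule ext) (rule play_threshold_guesser)
  then have "pmf_of_set (permutations_of_set {1..n})
        \<bind> play (threshold_guesser n ss) (threshold_state ss {})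
      = map_pmf (threshold_score n ss (threshold_state ss {}))
          (pmf_of_set (permutations_of_set {1..n}))"
    by (simp add: map_pmf_def)
  then show ?thesis
    by (simp add: expected_score_def threshold_guesser_def integral_pmf_of_set)
qed

lemma (in threshold_list) expected_score_bounds:
  "band_weight ss \<le> expected_score n (threshold_guesser n ss)"
  "expected_score n (threshold_guesser n ss) \<le> band_weight ss + 1"
proof -
  let ?P = "permutations_of_set {1..n}"
  let ?bands = "\<lambda>\<pi>. card {i. i < length ss \<and> last_in_band ss i \<pi>}"
  let ?score = "\<lambda>\<pi>. threshold_score n ss (threshold_state ss {}) \<pi>"
  have score: "?bands \<pi> \<le> ?score \<pi> \<and> ?score \<pi> \<le> ?bands \<pi> + 1" if "\<pi> \<in> ?P" for \<pi>
    using threshold_score_bounds[of \<pi> "{}"] permutations_of_setD[OF that]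
    by (simp split: if_splits)
  have "(\<Sum>\<pi>\<in>?P. real (?bands \<pi>)) \<le> (\<Sum>\<pi>\<in>?P. real (?score \<pi>))"
    and "(\<Sum>\<pi>\<in>?P. real (?score \<pi>)) \<le> (\<Sum>\<pi>\<in>?P. real (?bands \<pi> + 1))"
    using score by (intro sum_mono of_nat_mono; blast)+
  moreover have "(\<Sum>\<pi>\<in>?P. real (?bands \<pi> + 1)) = (\<Sum>\<pi>\<in>?P. real (?bands \<pi>)) + fact n"
    by (simp add: sum.distrib)
  ultimately show "band_weight ss \<le> expected_score n (threshold_guesser n ss)"
    "expected_score n (threshold_guesser n ss) \<le> band_weight ss + 1"
    unfolding expected_score_threshold_guesser sum_card_last_in_band by (simp_all add: field_simps)
qed

lemma le_two_power_ceiling_log: "0 < x \<Longrightarrow> x \<le> 2 ^ nat \<lceil>log 2 (real x)\<rceil>"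
proof -
  assume "0 < x"
  then have "real x = 2 powr log 2 (real x)"
    by simp
  also have "\<dots> \<le> 2 powr real (nat \<lceil>log 2 (real x)\<rceil>)"
    by (intro powr_mono) linarith+
  finally show ?thesis
    by (simp add: powr_realpow flip: of_nat_le_iff)
qed

lemma valid_threshold_guesser:
  assumes "1 \<le> n" "0 \<notin> set ss"
  shows "valid_guesser n (threshold_guesser n ss)"
proof -
  let ?m = "mem_bits (threshold_guesser n ss)"
  have bound: "prod_list (radices ss) \<le> 2 ^ ?m"
    using prod_radices_pos[OF assms(2)] unfolding threshold_guesser_def
    by (simp add: le_two_power_ceiling_log)
  show ?thesis
    unfolding valid_guesser_def
  proof (intro conjI allI impI ballI)
    show "init_state (threshold_guesser n ss) < 2 ^ ?m"
      using less_le_trans[OF threshold_state_less[OF assms(2)] bound]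
      by (simp add: threshold_guesser_def)
    fix x c
    show "set_pmf (guess_fn (threshold_guesser n ss) x) \<subseteq> {1..n}"
      using threshold_guess_range[OF assms(1)] by (simp add: threshold_guesser_def)
    show "set_pmf (trans_fn (threshold_guesser n ss) x c) \<subseteq> {..<2 ^ ?m}"
      using less_le_trans[OF threshold_step_less[OF assms(2)] bound]
      by (auto simp: threshold_guesser_def)
  qed
qed

section \<open>Geometrically spaced thresholds\<close>

lemma ratio_estimate:
  fixes x u a b :: real
  assumes x: "1 < x" and u: "2 \<le> u" and a: "u - 1 < a" "a \<le> u" and b: "x * u - 1 < b" "b \<le> x * u"
  shows "\<bar>a / b - 1 / x\<bar> \<le> 2 / (x * u)"
proof -
  have "u \<le> x * u"
    using x u by simp
  then have xu: "2 \<le> x * u"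
    using u by linarith
  have "1 / x - 2 / (x * u) \<le> (u - 1) / (x * u)"
    using x u by (simp add: field_simps)
  also have "\<dots> \<le> a / b"
    using a b u xu by (intro frac_le) auto
  finally have lower: "1 / x - 2 / (x * u) \<le> a / b" .
  have "a / b \<le> u / (x * u - 1)"
    using a b u xu by (intro frac_le) auto
  also have "\<dots> \<le> 1 / x + 2 / (x * u)"
  proof -
    have "u + 2 \<le> 2 * (x * u)"
      using \<open>u \<le> x * u\<close> xu by linarith
    then show ?thesis
      using x u xu by (simp add: field_simps)
  qed
  finally show ?thesis
    using lower by (simp add: abs_le_iff)
qed

text \<open>\<open>N_large\<close> gives \<open>\<delta> (1 + \<delta>)\<^sup>j > 1\<close> for \<open>j \<ge> N\<close>, so the thresholds
  \<open>\<lfloor>(1 + \<delta>)\<^sup>j\<rfloor>\<close> with \<open>j > N\<close> are distinct and at least 2.  The \<open>- 1\<close> in \<open>top_index\<close>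
  leaves a slack of \<open>log 2 n\<close> in the memory bound, which pays for rounding the memory up to
  whole bits.\<close>

locale geometric_thresholds =
  fixes \<delta> :: real and N :: nat
  assumes \<delta>_pos: "0 < \<delta>" and \<delta>_le_1: "\<delta> \<le> 1" and N_large: "1 / \<delta> < (1 + \<delta>) ^ N"
begin

definition q :: real where "q = 1 + \<delta>"

definition threshold :: "nat \<Rightarrow> nat" where "threshold j = nat \<lfloor>q ^ j\<rfloor>"

definition top_index :: "nat \<Rightarrow> nat" where "top_index n = nat \<lfloor>log q n\<rfloor> - 1"

definition thresholds :: "nat \<Rightarrow> nat list" where
  "thresholds n = map threshold [Suc N..<Suc (top_index n)]"

lemma q_gt_1: "1 < q"
  using \<delta>_pos by (simp add: q_def)

lemma threshold_bounds: "q ^ j - 1 < threshold j" "threshold j \<le> q ^ j"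
proof -
  have "real (threshold j) = \<lfloor>q ^ j\<rfloor>"
    using q_gt_1 unfolding threshold_def by simp
  then show "q ^ j - 1 < threshold j" "threshold j \<le> q ^ j"
    by linarith+
qed

lemma gap_gt_1: "N \<le> j \<Longrightarrow> 1 < \<delta> * q ^ j"
proof -
  assume "N \<le> j"
  then have "\<delta> * q ^ N \<le> \<delta> * q ^ j"
    using q_gt_1 \<delta>_pos by (simp add: power_increasing)
  moreover have "1 < \<delta> * q ^ N"
    using N_large \<delta>_pos by (simp add: q_def field_simps)
  ultimately show ?thesis by linarith
qed

lemma threshold_strict_mono:
  assumes "N \<le> a" "a < b"
  shows "threshold a < threshold b"
  using assms(2)
proof (induction b)
  case (Suc b)
  have "q ^ b + 1 < q ^ Suc b"
    using gap_gt_1[of b] Suc.prems assms(1) by (simp add: q_def algebra_simps)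
  then have "real (threshold b) < real (threshold (Suc b))"
    using threshold_bounds(2)[of b] threshold_bounds(1)[of "Suc b"] by linarith
  then have "threshold b < threshold (Suc b)"
    by simp
  with Suc show ?case
    by (cases "a = b") auto
qed simp

lemma threshold_ge_2: "N < j \<Longrightarrow> 2 \<le> threshold j"
proof -
  assume "N < j"
  then have "q * q ^ N \<le> q ^ j"
    using q_gt_1 by (metis power_Suc Suc_leI less_imp_le power_increasing)
  moreover have "q / \<delta> < q * q ^ N"
    using mult_strict_left_mono[OF N_large, of q] q_gt_1 by (simp add: q_def)
  moreover have "2 \<le> q / \<delta>"
    using \<delta>_pos \<delta>_le_1 by (simp add: q_def field_simps)
  ultimately show ?thesis
    using threshold_bounds(1)[of j] by linarith
qed

lemma threshold_le: "1 \<le> n \<Longrightarrow> j \<le> top_index n \<Longrightarrow> threshold j \<le> n"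
proof -
  assume "1 \<le> n" "j \<le> top_index n"
  moreover have "0 \<le> log q n"
    using \<open>1 \<le> n\<close> q_gt_1 by simp
  ultimately have "real j \<le> log q n"
    unfolding top_index_def by linarith
  then have "q ^ j \<le> n"
    using \<open>1 \<le> n\<close> q_gt_1 by (simp add: le_log_iff powr_realpow flip: powr_realpow)
  then show ?thesis
    using threshold_bounds(2)[of j] by linarith
qed

lemma length_thresholds: "length (thresholds n) = top_index n - N"
  by (simp add: thresholds_def del: upt_Suc)

lemma nth_thresholds: "i < length (thresholds n) \<Longrightarrow> thresholds n ! i = threshold (Suc N + i)"
  by (simp add: thresholds_def del: upt_Suc)

lemma zero_notin_thresholds: "0 \<notin> set (thresholds n)"
proof
  assume "0 \<in> set (thresholds n)"
  then obtain j where "Suc N \<le> j" "threshold j = 0"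
    unfolding thresholds_def by (auto simp del: upt_Suc)
  with threshold_ge_2[of j] show False
    by (simp add: Suc_le_eq)
qed

lemma threshold_list_thresholds:
  assumes "1 \<le> n"
  shows "threshold_list n (thresholds n)"
proof
  have "sorted_wrt (<) [Suc N..<Suc (top_index n)]"
    by (rule sorted_wrt_upt)
  then show "sorted_wrt (<) (thresholds n)"
    unfolding thresholds_def sorted_wrt_map
    by (rule sorted_wrt_mono_rel[rotated]) (auto intro: threshold_strict_mono)
  show "\<forall>s\<in>set (thresholds n). 2 \<le> s \<and> s \<le> n"
    using assms by (auto simp: thresholds_def intro: threshold_ge_2 threshold_le)
qed

lemma log_prod_radices_le:
  "log 2 (prod_list (radices (thresholds n))) \<le> real (top_index n * (top_index n + 1)) * log 2 q"
proof -
  define K where "K = top_index n"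
  have "real (prod_list (radices (thresholds n))) = (\<Prod>j\<in>{Suc N..<Suc K}. real (threshold j) ^ 2)"
    by (simp add: thresholds_def K_def prod.distinct_set_conv_list[symmetric] power2_eq_square
        del: upt_Suc)
  also have "\<dots> \<le> (\<Prod>j\<in>{Suc N..<Suc K}. (q ^ j) ^ 2)"
    using threshold_bounds(2) by (intro prod_mono) (simp add: power_mono)
  also have "\<dots> = q ^ (\<Sum>j\<in>{Suc N..<Suc K}. 2 * j)"
    unfolding power_sum by (intro prod.cong refl) (simp add: power_even_eq)
  also have "\<dots> \<le> q ^ (K * (K + 1))"
  proof (intro power_increasing)
    have "(\<Sum>j\<in>{Suc N..<Suc K}. 2 * j) \<le> (\<Sum>j=0..K. 2 * j)"
      by (intro sum_mono2) auto
    also have "\<dots> = K * (K + 1)"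
      using double_gauss_sum[of K, where ?'a = nat] by (simp add: sum_distrib_left)
    finally show "(\<Sum>j\<in>{Suc N..<Suc K}. 2 * j) \<le> K * (K + 1)" .
  qed (use q_gt_1 in simp)
  finally have "real (prod_list (radices (thresholds n))) \<le> q ^ (K * (K + 1))" .
  moreover have "0 < prod_list (radices (thresholds n))"
    using zero_notin_thresholds by (rule prod_radices_pos)
  ultimately have "log 2 (prod_list (radices (thresholds n))) \<le> log 2 (q ^ (K * (K + 1)))"
    by simp
  also have "\<dots> = real (K * (K + 1)) * log 2 q"
    using q_gt_1 by (simp add: log_nat_power)
  finally show ?thesis
    unfolding K_def .
qed

lemma top_index_bound:
  assumes "0 < top_index n"
  shows "real (top_index n * (top_index n + 1)) * log 2 q \<le> (log 2 n)\<^sup>2 * log q 2 - log 2 n"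
    and "1 \<le> log 2 n"
proof -
  define K where "K = top_index n"
  define L where "L = log q n"
  have "real K + 1 \<le> L"
    using assms unfolding K_def top_index_def L_def by linarith
  then have "real K * (real K + 1) \<le> (L - 1) * L"
    by (intro mult_mono) auto
  then have "real (K * (K + 1)) * log 2 q \<le> (L - 1) * L * log 2 q"
    using q_gt_1 by (intro mult_right_mono) (simp_all add: algebra_simps)
  also have "\<dots> = (log 2 n)\<^sup>2 * log q 2 - log 2 n"
    using q_gt_1 unfolding L_def log_def by (simp add: field_simps power2_eq_square)
  finally show "real (top_index n * (top_index n + 1)) * log 2 q \<le> (log 2 n)\<^sup>2 * log q 2 - log 2 n"
    unfolding K_def .
  have "0 < log q n"
    using \<open>real K + 1 \<le> L\<close> unfolding L_def by simp
  moreover have "log q 0 = 0"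
    by (simp add: log_def)
  ultimately have "1 < n"
    using q_gt_1 by (cases "n = 0") auto
  then show "1 \<le> log 2 n"
    by simp
qed

lemma mem_bits_threshold_guesser:
  assumes "1 \<le> n"
  shows "real (mem_bits (threshold_guesser n (thresholds n)))
    \<le> (log 2 n)\<^sup>2 * log q 2 + log 2 n"
proof -
  define l where "l = log 2 (prod_list (radices (thresholds n)))"
  have "1 \<le> prod_list (radices (thresholds n))"
    using prod_radices_pos[OF zero_notin_thresholds[of n]] by simp
  then have "0 \<le> l"
    unfolding l_def by simp
  then have mem: "real (mem_bits (threshold_guesser n (thresholds n))) = \<lceil>l\<rceil>"
    unfolding l_def threshold_guesser_def by simp
  have l: "l \<le> real (top_index n * (top_index n + 1)) * log 2 q"
    unfolding l_def by (rule log_prod_radices_le)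
  show ?thesis
  proof (cases "top_index n = 0")
    case True
    then have "\<lceil>l\<rceil> = 0"
      using l \<open>0 \<le> l\<close> by simp
    moreover have "0 \<le> log q 2" "0 \<le> log 2 n"
      using q_gt_1 assms by simp_all
    ultimately show ?thesis
      unfolding mem by simp
  next
    case False
    then show ?thesis
      unfolding mem using l top_index_bound[of n] by linarith
  qed
qed

lemma band_fraction_error:
  assumes i: "i < length (thresholds n)"
  shows "\<bar>card (band (thresholds n) i) / thresholds n ! i - \<delta> / q\<bar>
    \<le> (if i = 0 then 1 else 0) + 2 * (1 / q) ^ i"
proof (cases i)
  case 0
  have "card (band (thresholds n) i) = thresholds n ! i"
    using 0 by (simp add: band_def)
  moreover have "0 < thresholds n ! i"
    using nth_mem[OF i] zero_notin_thresholds by (metis gr0I)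
  moreover have "0 < \<delta> / q" "\<delta> / q < 1"
    using \<delta>_pos by (simp_all add: q_def)
  ultimately show ?thesis
    using 0 by simp
next
  case (Suc k)
  define u where "u = q ^ (Suc N + k)"
  have a: "thresholds n ! k = threshold (Suc N + k)"
    and b: "thresholds n ! i = threshold (Suc N + i)"
    using i Suc by (simp_all add: nth_thresholds)
  have "threshold (Suc N + k) < threshold (Suc N + i)"
    using Suc by (intro threshold_strict_mono) auto
  then have "card (band (thresholds n) i) / thresholds n ! i
      = 1 - threshold (Suc N + k) / threshold (Suc N + i)"
    using Suc a b by (simp add: band_def of_nat_diff field_simps)
  moreover have "1 - \<delta> / q = 1 / q"
    using q_gt_1 by (simp add: q_def field_simps)
  moreover have "\<bar>threshold (Suc N + k) / threshold (Suc N + i) - 1 / q\<bar> \<le> 2 / (q * u)"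
  proof (rule ratio_estimate)
    have qu: "q * u = q ^ (Suc N + i)"
      using Suc by (simp add: u_def)
    show "2 \<le> u"
      using threshold_ge_2[of "Suc N + k"] threshold_bounds(2)[of "Suc N + k"]
      unfolding u_def by simp
    show "u - 1 < threshold (Suc N + k)" "threshold (Suc N + k) \<le> u"
      using threshold_bounds[of "Suc N + k"] unfolding u_def by simp_all
    show "q * u - 1 < threshold (Suc N + i)" "threshold (Suc N + i) \<le> q * u"
      using threshold_bounds[of "Suc N + i"] unfolding qu by simp_all
  qed (rule q_gt_1)
  moreover have "2 / (q * u) \<le> 2 * (1 / q) ^ i"
  proof -
    have "q ^ i \<le> q * u"
      using q_gt_1 Suc unfolding u_def by (simp add: power_increasing flip: power_Suc)
    then have "2 / (q * u) \<le> 2 / q ^ i"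
      using q_gt_1 by (intro divide_left_mono) (auto simp: u_def)
    then show ?thesis
      by (simp add: power_one_over)
  qed
  ultimately show ?thesis
    using Suc by (simp add: abs_minus_commute)
qed

lemma band_weight_error:
  "\<bar>band_weight (thresholds n) - length (thresholds n) * (\<delta> / q)\<bar> \<le> 1 + 2 / (1 - 1 / q)"
proof -
  define m where "m = length (thresholds n)"
  define r where "r = 1 / q"
  have r: "0 < r" "r < 1"
    using q_gt_1 by (simp_all add: r_def)
  have "\<bar>band_weight (thresholds n) - m * (\<delta> / q)\<bar>
      = \<bar>\<Sum>i<m. card (band (thresholds n) i) / thresholds n ! i - \<delta> / q\<bar>"
    by (simp add: band_weight_def m_def sum_subtractf)
  also have "\<dots> \<le> (\<Sum>i<m. (if i = 0 then 1 else 0) + 2 * r ^ i)"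
    unfolding r_def m_def by (intro order_trans[OF sum_abs] sum_mono band_fraction_error) simp
  also have "\<dots> = (\<Sum>i<m. if i = 0 then 1 else 0) + 2 * (\<Sum>i<m. r ^ i)"
    by (simp add: sum.distrib sum_distrib_left)
  also have "(\<Sum>i<m. if i = 0 then 1 else 0 :: real) \<le> 1"
    by (simp add: sum.delta)
  also have "(\<Sum>i<m. r ^ i) \<le> 1 / (1 - r)"
    using r by (simp add: sum_gp_strict divide_right_mono)
  finally show ?thesis
    unfolding r_def m_def by simp
qed

lemma length_thresholds_error:
  assumes "1 \<le> n"
  shows "\<bar>length (thresholds n) - log q n\<bar> \<le> N + 2"
proof -
  have "0 \<le> log q n"
    using assms q_gt_1 by simp
  then show ?thesis
    unfolding length_thresholds top_index_def by linarith
qed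

lemma expected_score_error:
  assumes "1 \<le> n"
  shows "\<bar>expected_score n (threshold_guesser n (thresholds n)) - \<delta> / (q * ln q) * ln n\<bar>
    \<le> 2 + 2 / (1 - 1 / q) + (N + 2) * (\<delta> / q)"
proof -
  interpret threshold_list n "thresholds n"
    using assms by (rule threshold_list_thresholds)
  have "\<delta> / (q * ln q) * ln n = log q n * (\<delta> / q)"
    by (simp add: log_def mult_ac)
  moreover have "\<bar>length (thresholds n) * (\<delta> / q) - log q n * (\<delta> / q)\<bar> \<le> (N + 2) * (\<delta> / q)"
  proof -
    have "\<bar>length (thresholds n) * (\<delta> / q) - log q n * (\<delta> / q)\<bar>
        = \<bar>length (thresholds n) - log q n\<bar> * (\<delta> / q)"
      using \<delta>_pos q_gt_1 by (simp only: left_diff_distrib[symmetric] abs_mult) simp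
    also have "\<dots> \<le> (N + 2) * (\<delta> / q)"
      using \<delta>_pos q_gt_1 by (intro mult_right_mono length_thresholds_error assms) auto
    finally show ?thesis .
  qed
  ultimately show ?thesis
    using expected_score_bounds band_weight_error[of n] by (simp add: abs_le_iff)
qed

end

lemma asymp_equiv_if_bounded_difference:
  fixes f g :: "nat \<Rightarrow> real"
  assumes bounded: "eventually (\<lambda>n. \<bar>f n - g n\<bar> \<le> C) at_top" and g: "filterlim g at_top at_top"
  shows "f \<sim>[at_top] g"
proof (rule smallo_imp_asymp_equiv, rule landau_o.smallI)
  fix e :: real assume "0 < e"
  have "eventually (\<lambda>n. max (C / e) 0 \<le> g n) at_top"
    using g unfolding filterlim_at_top by blast
  then show "eventually (\<lambda>n. norm (f n - g n) \<le> e * norm (g n)) at_top"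
    using bounded
  proof eventually_elim
    case (elim n)
    then have "C \<le> e * g n"
      using \<open>0 < e\<close> by (simp add: field_simps)
    with elim show ?case
      by simp
  qed
qed

theorem mainTheorem2:
  fixes \<delta> :: real
  assumes "0 < \<delta>" and "\<delta> \<le> 1"
  shows "\<exists>G :: nat \<Rightarrow> guesser.
     (\<forall>n \<ge> 1. valid_guesser n (G n) \<and>
        real (mem_bits (G n)) \<le> (log 2 (real n))\<^sup>2 * log (1 + \<delta>) 2 + log 2 (real n)) \<and>
     (\<lambda>n. expected_score n (G n)) \<sim>[at_top]
       (\<lambda>n. \<delta> / ((1 + \<delta>) * ln (1 + \<delta>)) * ln (real n))"
proof -
  obtain N where "1 / \<delta> < (1 + \<delta>) ^ N"
    using real_arch_pow[of "1 + \<delta>" "1 / \<delta>"] assms by auto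
  then interpret geometric_thresholds \<delta> N
    using assms by unfold_locales
  have "filterlim (\<lambda>n. \<delta> / (q * ln q) * ln (real n)) at_top at_top"
    using \<delta>_pos q_gt_1
    by (intro filterlim_tendsto_pos_mult_at_top[OF tendsto_const]
        filterlim_compose[OF ln_at_top filterlim_real_sequentially]) simp
  moreover have "eventually (\<lambda>n. \<bar>expected_score n (threshold_guesser n (thresholds n))
      - \<delta> / (q * ln q) * ln (real n)\<bar> \<le> 2 + 2 / (1 - 1 / q) + (N + 2) * (\<delta> / q)) at_top"
    by (rule eventually_mono[OF eventually_ge_at_top[of 1]]) (rule expected_score_error)
  ultimately have "(\<lambda>n. expected_score n (threshold_guesser n (thresholds n)))
      \<sim>[at_top] (\<lambda>n. \<delta> / (q * ln q) * ln (real n))"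
    by (intro asymp_equiv_if_bounded_difference)
  then show ?thesis
    using valid_threshold_guesser zero_notin_thresholds mem_bits_threshold_guesser
    unfolding q_def by (intro exI[of _ "\<lambda>n. threshold_guesser n (thresholds n)"]) auto
qed

end
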